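(* Let $R$ be an Artinian ring, with notation as in the context. Let $f_1,f_2\colon[R^n]\to[R^m]$ be $\mathrm{OVIC}(R)$-morphisms, $f_i=(f_i',f_i'')$. Assume that $f_1''=f_2''$ and that the free rows of $\Phi(f_1')$ and of $\Phi(f_2')$ are equal. Then $f_1=f_2$.
   Context: Let $R$ be an Artinian ring, $J(R)$ its Jacobson radical, $\overline R=R/J(R)$, and $\bar x$ (resp. $\bar A$) the image of an element (resp. entrywise image of a matrix). $\overline R\cong \mathrm{Mat}_{\mu_1}(\mathbb D_1)\times\cdots\times\mathrm{Mat}_{\mu_q}(\mathbb D_q)$ with division rings $\mathbb D_k$; put $\mu=\mu_1+\cdots+\mu_q$. Fix orthogonal idempotents $e^k_i\in R$ ($1\le k\le q$, $1\le i\le\mu_k$) with $\sum_{k,i}e^k_i=1$ lifting the orthogonal idempotents $\bar e^k_i$ of $\overline R$ given by the diagonal matrix units of this decomposition (so $e^k_iR\cong e^{k'}_{i'}R$ iff $k=k'$). Let $\mathbb L_{hk}=e^h_1Re^k_1$. The Peirce decomposition $R\cong\mathrm{End}(R_R)=\bigoplus\mathrm{Hom}(e^k_jR,e^h_iR)$, with the isomorphisms $e^h_iR\cong e^h_1R$, gives an injective ring homomorphism (the Artin–Wedderburn embedding) $\Phi\colon R\to\mathrm{Mat}_\mu(R)$, $x\mapsto(\Phi_{hk}(x))_{h,k=1}^q$ a $q\times q$ block matrix with $\Phi_{hk}(x)\in\mathrm{Mat}_{\mu_h,\mu_k}(\mathbb L_{hk})$; its reduction $\overline\Phi\colon\overline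 R\to\mathrm{Mat}_\mu(\overline R)$ sends $\bar x$ to the block-diagonal matrix whose $k$-th block is the $\mathrm{Mat}_{\mu_k}(\mathbb D_k)$-component of $\bar x$. Vectors $R^n$ are columns (right $R$-modules); an $R$-linear $h\colon R^a\to R^b$ is a $b\times a$ matrix, and $\Phi(h)\in\mathrm{Mat}_{\mu b,\mu a}(R)$ is obtained by replacing each entry $x$ by $\Phi(x)$; similarly $\overline\Phi(\bar h)$. Distinguished basis: for $1\le k\le q$, $1\le c\le a$, $1\le r\le\mu_k$, let $\vec v(k)_{(c-1)\mu_k+r}$ be the standard basis vector of $R^{\mu a}$ of index $(c-1)\mu+\mu_1+\cdots+\mu_{k-1}+r$; define $\vec w(k)_i$ in $R^{\mu b}$ the same way, bars denoting images over $\overline R$. For surjective $h\colon R^a\to R^b$ and each $k$, $\mathfrak S(h,k)$ is the smallest, in the lexicographic order on increasingly sorted sequences, subset $S\subset\{1,\dots,\mu_ka\}$ such that $\{\overline\Phi(\bar h)(\overline{\vec v(k)_j}):j\in S\}$ is a basis of the right $\mathbb D_k$-module $\bigoplus_{i=1}^{\mu_kb}\overline{\vec w(k)_i}\cdot\mathbb D_k$. A surjective $h$ is column-adapted if (i) for every $k$, writing $\mathfrak S(h,k)=\{j_1<\cdots<j_{\mu_kb}\}$, $\overline\Phi(\bar h)(\overline{\vec v(k)_{j_i}})=\overline{\vec w(k)_i}$ for all $i$, and (ii) $\Phi(h)(\vec v(k)_{j_i})=\vec w(k)_i$ for all $k,i$. $\mathrm{VIC}(R)$ has objects $[R^n]$,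 $n\ge0$; a morphism $[R^n]\to[R^m]$ is a pair $(f',f'')$ with $f'\colon R^n\to R^m$ injective $R$-linear, $f''\colon R^m\to R^n$ $R$-linear, $f''\circ f'=\mathrm{id}$; composition $(g',g'')\circ(f',f'')=(g'f',f''g'')$. $\mathrm{OVIC}(R)$ is the subcategory with the same objects and morphisms those $(f',f'')$ with $f''$ column-adapted. For an $\mathrm{OVIC}(R)$-morphism $(f',f'')\colon[R^n]\to[R^m]$, the rows of $\Phi(f')\in\mathrm{Mat}_{\mu m,\mu n}(R)$ are indexed by the standard basis of $R^{\mu m}$; the dependent rows are those indexed by $\vec v(k)_j$ (distinguished basis of $R^{\mu m}$) with $j\in\mathfrak S(f'',k)$ for some $k$, and all other rows are the free rows. *)

theory Defs
  imports Main "Jordan_Normal_Form.Matrix"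
begin

definition right_ideal :: "'a::ring_1 set \<Rightarrow> bool" where
  "right_ideal I \<longleftrightarrow> 0 \<in> I \<and> (\<forall>x\<in>I. \<forall>y\<in>I. x + y \<in> I) \<and> (\<forall>x\<in>I. - x \<in> I)
     \<and> (\<forall>x\<in>I. \<forall>r. x * r \<in> I)"

definition right_artinian :: "'a::ring_1 itself \<Rightarrow> bool" where
  "right_artinian _ \<longleftrightarrow>
     (\<forall>C :: nat \<Rightarrow> 'a set. (\<forall>n. right_ideal (C n)) \<and> (\<forall>n. C (Suc n) \<subseteq> C n)
        \<longrightarrow> (\<exists>N. \<forall>n\<ge>N. C n = C N))"

definition maximal_right_ideal :: "'a::ring_1 set \<Rightarrow> bool" where
  "maximal_right_ideal I \<longleftrightarrow> right_ideal I \<and> I \<noteq> UNIV \<and>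
     (\<forall>K. right_ideal K \<and> I \<subseteq> K \<longrightarrow> K = I \<or> K = UNIV)"

definition jac :: "'a::ring_1 set" where
  "jac = \<Inter> {I. maximal_right_ideal I}"

definition congJ :: "'a::ring_1 \<Rightarrow> 'a \<Rightarrow> bool" where
  "congJ x y \<longleftrightarrow> x - y \<in> jac"

text \<open>Data: q, the block sizes mu k (1 <= k <= q), idempotents idem k i, and
  the isomorphisms e^k_i R -> e^k_1 R (left multiplication by iso k i in
  e^k_1 R e^k_i) with inverses (left multiplication by isoinv k i in e^k_i R e^k_1).\<close>
record 'a awdata =
  nq :: nat
  mu :: "nat \<Rightarrow> nat"
  idem :: "nat \<Rightarrow> nat \<Rightarrow> 'a"
  iso :: "nat \<Rightarrow> nat \<Rightarrow> 'a"
  isoinv :: "nat \<Rightarrow> nat \<Rightarrow> 'a"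

definition aw_index_set :: "'a awdata \<Rightarrow> (nat \<times> nat) set" where
  "aw_index_set A = {(k, i). 1 \<le> k \<and> k \<le> nq A \<and> 1 \<le> i \<and> i \<le> mu A k}"

text \<open>The corner ring e R e modulo J is a division ring (e not in J, every
  nonzero element of the corner has a right inverse in the corner, modulo J).\<close>
definition corner_division_modJ :: "'a::ring_1 \<Rightarrow> bool" where
  "corner_division_modJ e \<longleftrightarrow> e \<notin> jac \<and>
     (\<forall>x. e * x * e \<notin> jac \<longrightarrow> (\<exists>y. congJ ((e * x * e) * (e * y * e)) e))"

text \<open>Valid Artin--Wedderburn data for an Artinian ring: orthogonal idempotents
  summing to 1, isomorphisms e^k_i R = e^k_1 R; modulo J the elements
  iso'(k,i) * iso(k,j) form a full system of matrix units with
  R/J = prod_k Mat_{mu_k}(D_k), D_k = e^k_1 (R/J) e^k_1 a division ring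
  (off-diagonal corners e^k_1 R e^l_1, k <> l, vanish modulo J).\<close>
definition aw_valid :: "'a::ring_1 awdata \<Rightarrow> bool" where
  "aw_valid A \<longleftrightarrow>
     (\<forall>k\<in>{1..nq A}. 1 \<le> mu A k) \<and>
     (\<forall>(k,i)\<in>aw_index_set A. idem A k i * idem A k i = idem A k i) \<and>
     (\<forall>(k,i)\<in>aw_index_set A. \<forall>(l,j)\<in>aw_index_set A. (k,i) \<noteq> (l,j) \<longrightarrow> idem A k i * idem A l j = 0) \<and>
     (\<Sum>(k,i)\<in>aw_index_set A. idem A k i) = 1 \<and>
     (\<forall>(k,i)\<in>aw_index_set A.
        iso A k i = idem A k 1 * iso A k i * idem A k i \<and>
        isoinv A k i = idem A k i * isoinv A k i * idem A k 1 \<and>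
        iso A k i * isoinv A k i = idem A k 1 \<and>
        isoinv A k i * iso A k i = idem A k i) \<and>
     (\<forall>k\<in>{1..nq A}. corner_division_modJ (idem A k 1)) \<and>
     (\<forall>k\<in>{1..nq A}. \<forall>l\<in>{1..nq A}. k \<noteq> l \<longrightarrow> (\<forall>x. idem A k 1 * x * idem A l 1 \<in> jac))"

definition aw_off :: "'a awdata \<Rightarrow> nat \<Rightarrow> nat" where
  "aw_off A k = (\<Sum>l\<in>{1..<k}. mu A l)"

definition aw_mu :: "'a awdata \<Rightarrow> nat" where
  "aw_mu A = (\<Sum>l\<in>{1..nq A}. mu A l)"

text \<open>For 0 <= s < mu: block index k and 1-based position r inside the block.\<close>
definition aw_blk :: "'a awdata \<Rightarrow> nat \<Rightarrow> nat" where
  "aw_blk A s = (LEAST k. s < aw_off A (Suc k))"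

definition aw_pos :: "'a awdata \<Rightarrow> nat \<Rightarrow> nat" where
  "aw_pos A s = s - aw_off A (aw_blk A s) + 1"

definition aw_entry :: "'a::ring_1 awdata \<Rightarrow> 'a \<Rightarrow> nat \<Rightarrow> nat \<Rightarrow> 'a" where
  "aw_entry A x s s' =
     iso A (aw_blk A s) (aw_pos A s) * x * isoinv A (aw_blk A s') (aw_pos A s')"

definition aw_Phi :: "'a::ring_1 awdata \<Rightarrow> 'a mat \<Rightarrow> 'a mat" where
  "aw_Phi A h = (let M = aw_mu A in
     mat (M * dim_row h) (M * dim_col h)
       (\<lambda>(p, p'). aw_entry A (h $$ (p div M, p' div M)) (p mod M) (p' mod M)))"

text \<open>0-based index of the distinguished basis vector v(k)_j (j 1-based):
  the standard index (c-1)mu + mu_1+...+mu_(k-1) + r, j = (c-1) mu_k + r.\<close>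
definition aw_vidx :: "'a awdata \<Rightarrow> nat \<Rightarrow> nat \<Rightarrow> nat" where
  "aw_vidx A k j = ((j - 1) div mu A k) * aw_mu A + aw_off A k + (j - 1) mod mu A k"

definition aw_vec :: "'a::ring_1 awdata \<Rightarrow> nat \<Rightarrow> nat \<Rightarrow> nat \<Rightarrow> 'a vec" where
  "aw_vec A a k j = unit_vec (aw_mu A * a) (aw_vidx A k j)"

definition surj_mat :: "'a::ring_1 mat \<Rightarrow> bool" where
  "surj_mat h \<longleftrightarrow> (\<forall>y\<in>carrier_vec (dim_row h). \<exists>x\<in>carrier_vec (dim_col h). h *\<^sub>v x = y)"

text \<open>D_k = e^k_1 (R/J) e^k_1, represented by elements d with d = e d e.\<close>
definition aw_D :: "'a::ring_1 awdata \<Rightarrow> nat \<Rightarrow> 'a set" where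
  "aw_D A k = {d. d = idem A k 1 * d * idem A k 1}"

text \<open>{ bar(Phi(h))(bar v(k)_j) : j in S } is a basis (family indexed by S) of
  the right D_k-module (+)_{i=1}^{mu_k b} bar w(k)_i D_k, all over R/J.\<close>
definition aw_basis :: "'a::ring_1 awdata \<Rightarrow> 'a mat \<Rightarrow> nat \<Rightarrow> nat set \<Rightarrow> bool" where
  "aw_basis A h k S \<longleftrightarrow>
     (let a = dim_col h; b = dim_row h; N = aw_mu A * b;
          col = (\<lambda>j. aw_Phi A h *\<^sub>v aw_vec A a k j);
          comb = (\<lambda>d p. \<Sum>i\<in>{1..mu A k * b}. aw_vec A b k i $ p * d i) in
      (\<forall>j\<in>S. \<exists>d. (\<forall>i. d i \<in> aw_D A k) \<and> (\<forall>p<N. congJ (col j $ p) (comb d p))) \<and>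
      (\<forall>d. (\<forall>i. d i \<in> aw_D A k) \<longrightarrow>
         (\<exists>c. (\<forall>j. c j \<in> aw_D A k) \<and> (\<forall>p<N. congJ (\<Sum>j\<in>S. col j $ p * c j) (comb d p)))) \<and>
      (\<forall>c. (\<forall>j. c j \<in> aw_D A k) \<and> (\<forall>p<N. congJ (\<Sum>j\<in>S. col j $ p * c j) 0)
         \<longrightarrow> (\<forall>j\<in>S. congJ (c j) 0)))"

definition aw_cands :: "'a::ring_1 awdata \<Rightarrow> 'a mat \<Rightarrow> nat \<Rightarrow> nat set set" where
  "aw_cands A h k = {S. S \<subseteq> {1..mu A k * dim_col h} \<and> aw_basis A h k S}"

definition lex_sorted_less :: "nat set \<Rightarrow> nat set \<Rightarrow> bool" where
  "lex_sorted_less S T \<longleftrightarrow>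
     (sorted_list_of_set S, sorted_list_of_set T) \<in> lexord {(x, y). x < y}"

definition is_frakS :: "'a::ring_1 awdata \<Rightarrow> 'a mat \<Rightarrow> nat \<Rightarrow> nat set \<Rightarrow> bool" where
  "is_frakS A h k S \<longleftrightarrow> S \<in> aw_cands A h k \<and>
     (\<forall>T\<in>aw_cands A h k. T \<noteq> S \<longrightarrow> lex_sorted_less S T)"

definition frakS :: "'a::ring_1 awdata \<Rightarrow> 'a mat \<Rightarrow> nat \<Rightarrow> nat set" where
  "frakS A h k = (THE S. is_frakS A h k S)"

definition column_adapted :: "'a::ring_1 awdata \<Rightarrow> 'a mat \<Rightarrow> bool" where
  "column_adapted A h \<longleftrightarrow> surj_mat h \<and>
     (\<forall>k\<in>{1..nq A}. (\<exists>S. is_frakS A h k S) \<and>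
        (\<exists>j. strict_mono_on {1..mu A k * dim_row h} j \<and>
             j ` {1..mu A k * dim_row h} = frakS A h k \<and>
             (\<forall>i\<in>{1..mu A k * dim_row h}.
                (\<forall>p<aw_mu A * dim_row h.
                   congJ ((aw_Phi A h *\<^sub>v aw_vec A (dim_col h) k (j i)) $ p)
                         (aw_vec A (dim_row h) k i $ p)) \<and>
                aw_Phi A h *\<^sub>v aw_vec A (dim_col h) k (j i) = aw_vec A (dim_row h) k i)))"

definition VIC_mor :: "nat \<Rightarrow> nat \<Rightarrow> 'a::ring_1 mat \<times> 'a mat \<Rightarrow> bool" where
  "VIC_mor n m f \<longleftrightarrow> fst f \<in> carrier_mat m n \<and> snd f \<in> carrier_mat n m \<and>
     inj_on (\<lambda>x. fst f *\<^sub>v x) (carrier_vec n) \<and> snd f * fst f = 1\<^sub>m n"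

definition OVIC_mor :: "'a::ring_1 awdata \<Rightarrow> nat \<Rightarrow> nat \<Rightarrow> 'a mat \<times> 'a mat \<Rightarrow> bool" where
  "OVIC_mor A n m f \<longleftrightarrow> VIC_mor n m f \<and> column_adapted A (snd f)"

text \<open>Dependent rows of Phi(f') (0-based indices into R^(mu m)), determined by f''.\<close>
definition dep_rows :: "'a::ring_1 awdata \<Rightarrow> 'a mat \<Rightarrow> nat set" where
  "dep_rows A f2 = (\<Union>k\<in>{1..nq A}. aw_vidx A k ` frakS A f2 k)"

end

theory Submission
  imports Defs
begin

text \<open>
  Since \<open>\<Sum> isoinv(k,i) * iso(k,i) = \<Sum> e(k,i) = 1\<close>, the embedding \<open>\<Phi>\<close> is
  multiplicative on matrices, \<open>\<Phi>(h F) = \<Phi>(h) \<Phi>(F)\<close>, and \<open>F\<close> can be read back from \<open>\<Phi>(F)\<close>.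
  So \<open>f'' f1' = 1 = f'' f2'\<close> gives \<open>\<Phi>(f'') (\<Phi>(f1') - \<Phi>(f2')) = 0\<close>. Column-adaptedness says that
  the column of \<open>\<Phi>(f'')\<close> at a dependent index \<open>v(k)_(j_i)\<close> is the unit vector \<open>w(k)_i\<close>, and
  distinct dependent indices give distinct unit vectors. Hence row \<open>w(k)_i\<close> of that product
  expresses row \<open>v(k)_(j_i)\<close> of \<open>\<Phi>(f1') - \<Phi>(f2')\<close> through its free rows, which vanish.
\<close>

lemma aw_off_mono: "k \<le> k' \<Longrightarrow> aw_off A k \<le> aw_off A k'"
  unfolding aw_off_def by (rule sum_mono2) auto

lemma aw_off_Suc: "1 \<le> k \<Longrightarrow> aw_off A (Suc k) = aw_off A k + mu A k"
  unfolding aw_off_def by (simp add: atLeastLessThanSuc)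

lemma aw_mu_eq_aw_off: "aw_mu A = aw_off A (Suc (nq A))"
  unfolding aw_off_def aw_mu_def by (simp add: atLeastLessThanSuc_atLeastAtMost)

lemma aw_blk_bounds:
  assumes "s < aw_mu A"
  shows "1 \<le> aw_blk A s" "aw_blk A s \<le> nq A" "aw_off A (aw_blk A s) \<le> s"
    "s < aw_off A (aw_blk A s) + mu A (aw_blk A s)"
proof -
  let ?P = "\<lambda>k. s < aw_off A (Suc k)"
  have "?P (nq A)" using assms aw_mu_eq_aw_off by metis
  then have le: "aw_blk A s \<le> nq A" and P: "?P (aw_blk A s)"
    unfolding aw_blk_def by (auto intro: Least_le LeastI)
  have pos: "aw_blk A s \<noteq> 0" using P by (cases "aw_blk A s") (simp_all add: aw_off_def)
  have "\<not> ?P (aw_blk A s - 1)"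
    unfolding aw_blk_def by (rule not_less_Least) (use pos in \<open>simp add: aw_blk_def\<close>)
  then show "aw_off A (aw_blk A s) \<le> s" using pos by simp
  show "s < aw_off A (aw_blk A s) + mu A (aw_blk A s)"
    using P aw_off_Suc[of "aw_blk A s" A] pos by simp
  show "1 \<le> aw_blk A s" "aw_blk A s \<le> nq A" using pos le by simp_all
qed

lemma aw_blk_off_add:
  assumes "1 \<le> k" "t < mu A k"
  shows "aw_blk A (aw_off A k + t) = k"
  unfolding aw_blk_def
proof (rule Least_equality)
  show "aw_off A k + t < aw_off A (Suc k)" using aw_off_Suc[of k A] assms by simp
  show "k \<le> y" if "aw_off A k + t < aw_off A (Suc y)" for y
    using that aw_off_mono[of "Suc y" k A] by (metis not_less_eq_eq trans_le_add1 leD)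
qed

lemma aw_pos_off_add: "1 \<le> k \<Longrightarrow> t < mu A k \<Longrightarrow> aw_pos A (aw_off A k + t) = t + 1"
  unfolding aw_pos_def by (simp add: aw_blk_off_add)

lemma aw_off_add_less_aw_mu:
  assumes "1 \<le> k" "k \<le> nq A" "t < mu A k"
  shows "aw_off A k + t < aw_mu A"
  using aw_off_mono[of "Suc k" "Suc (nq A)" A] aw_off_Suc[of k A] aw_mu_eq_aw_off[of A] assms
  by simp

lemma sum_aw_blk_aw_pos:
  "(\<Sum>s<aw_mu A. g (aw_blk A s) (aw_pos A s)) = (\<Sum>(k,i)\<in>aw_index_set A. g k i)"
proof (rule sum.reindex_bij_witness[where j = "\<lambda>s. (aw_blk A s, aw_pos A s)"
      and i = "\<lambda>(k,i). aw_off A k + (i - 1)"])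
  fix s assume "s \<in> {..<aw_mu A}"
  then have "s < aw_mu A" by simp
  note bounds = aw_blk_bounds[OF this]
  then show "(case (aw_blk A s, aw_pos A s) of (k, i) \<Rightarrow> aw_off A k + (i - 1)) = s"
    and "(aw_blk A s, aw_pos A s) \<in> aw_index_set A"
    unfolding aw_pos_def aw_index_set_def by auto
next
  fix a assume "a \<in> aw_index_set A"
  then obtain k i where a: "a = (k, i)" "1 \<le> k" "k \<le> nq A" "1 \<le> i" "i \<le> mu A k"
    unfolding aw_index_set_def by auto
  then have t: "i - 1 < mu A k" by simp
  show "(case a of (k, i) \<Rightarrow> aw_off A k + (i - 1)) \<in> {..<aw_mu A}"
    and "(aw_blk A (case a of (k, i) \<Rightarrow> aw_off A k + (i - 1)),
          aw_pos A (case a of (k, i) \<Rightarrow> aw_off A k + (i - 1))) = a"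
    using a aw_off_add_less_aw_mu[OF a(2,3) t] aw_blk_off_add[OF a(2) t] aw_pos_off_add[OF a(2) t]
    by simp_all
qed simp

text \<open>\<open>(k, i) \<in> aw_vidx_domain A b\<close> indexes the distinguished basis vector \<open>v(k)\<^sub>i\<close> of \<open>R\<^bsup>\<mu> b\<^esup>\<close>.\<close>

definition aw_vidx_domain :: "'a awdata \<Rightarrow> nat \<Rightarrow> (nat \<times> nat) set" where
  "aw_vidx_domain A b = {(k, i). 1 \<le> k \<and> k \<le> nq A \<and> 1 \<le> i \<and> i \<le> mu A k * b}"

lemma aw_vidx_div_mod:
  assumes "aw_valid A" and "(k, i) \<in> aw_vidx_domain A b"
  shows "aw_vidx A k i div aw_mu A = (i - 1) div mu A k"
    and "aw_vidx A k i mod aw_mu A = aw_off A k + (i - 1) mod mu A k"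
    and "aw_vidx A k i < aw_mu A * b"
proof -
  have k: "1 \<le> k" "k \<le> nq A" and i: "1 \<le> i" "i \<le> mu A k * b"
    using assms(2) by (auto simp: aw_vidx_domain_def)
  have "0 < mu A k" using assms(1) k unfolding aw_valid_def by (simp add: Suc_le_eq)
  then have t: "aw_off A k + (i - 1) mod mu A k < aw_mu A"
    using k by (intro aw_off_add_less_aw_mu) simp_all
  have c: "(i - 1) div mu A k < b"
    using i \<open>0 < mu A k\<close> by (simp add: div_less_iff_less_mult mult.commute)
  have eq: "aw_vidx A k i = (i - 1) div mu A k * aw_mu A + (aw_off A k + (i - 1) mod mu A k)"
    unfolding aw_vidx_def by simp
  show "aw_vidx A k i div aw_mu A = (i - 1) div mu A k"
    and "aw_vidx A k i mod aw_mu A = aw_off A k + (i - 1) mod mu A k"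
    using eq t by simp_all
  have "aw_vidx A k i < Suc ((i - 1) div mu A k) * aw_mu A" using eq t by simp
  also have "\<dots> \<le> b * aw_mu A" using c by (intro mult_le_mono1) simp
  finally show "aw_vidx A k i < aw_mu A * b" by (simp add: mult.commute)
qed

lemma inj_on_aw_vidx:
  assumes "aw_valid A"
  shows "inj_on (\<lambda>(k, i). aw_vidx A k i) (aw_vidx_domain A b)"
proof (rule inj_onI, clarify)
  fix k i k' i'
  assume ki: "(k, i) \<in> aw_vidx_domain A b" and ki': "(k', i') \<in> aw_vidx_domain A b"
    and eq: "aw_vidx A k i = aw_vidx A k' i'"
  note dm = aw_vidx_div_mod[OF assms ki] and dm' = aw_vidx_div_mod[OF assms ki']
  have k: "1 \<le> k" "0 < mu A k" "1 \<le> i" and k': "1 \<le> k'" "0 < mu A k'" "1 \<le> i'"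
    using assms ki ki' unfolding aw_vidx_domain_def aw_valid_def by (auto simp: Suc_le_eq)
  have "aw_blk A (aw_off A k + (i - 1) mod mu A k) = aw_blk A (aw_off A k' + (i' - 1) mod mu A k')"
    using dm(2) dm'(2) eq by metis
  then have "k = k'" using k k' by (simp add: aw_blk_off_add)
  moreover have "(i - 1) div mu A k = (i' - 1) div mu A k" "(i - 1) mod mu A k = (i' - 1) mod mu A k"
    using dm dm' eq \<open>k = k'\<close> by (metis, simp)
  then have "i - 1 = i' - 1" by (metis div_mult_mod_eq)
  ultimately show "k = k' \<and> i = i'" using k(3) k'(3) by linarith
qed

lemma sum_aw_isoinv_iso:
  assumes "aw_valid A"
  shows "(\<Sum>s<aw_mu A. isoinv A (aw_blk A s) (aw_pos A s) * iso A (aw_blk A s) (aw_pos A s)) = 1"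
proof -
  have "(\<Sum>s<aw_mu A. isoinv A (aw_blk A s) (aw_pos A s) * iso A (aw_blk A s) (aw_pos A s))
      = (\<Sum>(k,i)\<in>aw_index_set A. isoinv A k i * iso A k i)"
    by (rule sum_aw_blk_aw_pos)
  also have "\<dots> = (\<Sum>(k,i)\<in>aw_index_set A. idem A k i)"
    using assms unfolding aw_valid_def by (intro sum.cong) auto
  also have "\<dots> = 1"
    using assms unfolding aw_valid_def by blast
  finally show ?thesis .
qed

lemma aw_entry_sum: "aw_entry A (\<Sum>i\<in>S. f i) s t = (\<Sum>i\<in>S. aw_entry A (f i) s t)"
  unfolding aw_entry_def by (simp add: sum_distrib_left sum_distrib_right)

lemma sum_aw_entry_mult:
  assumes "aw_valid A"
  shows "(\<Sum>u<aw_mu A. aw_entry A x s u * aw_entry A y u t) = aw_entry A (x * y) s t"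
proof -
  let ?iso = "\<lambda>u. iso A (aw_blk A u) (aw_pos A u)"
    and ?isoinv = "\<lambda>u. isoinv A (aw_blk A u) (aw_pos A u)"
  have "(\<Sum>u<aw_mu A. aw_entry A x s u * aw_entry A y u t)
      = ?iso s * x * (\<Sum>u<aw_mu A. ?isoinv u * ?iso u) * y * ?isoinv t"
    by (simp add: aw_entry_def sum_distrib_left sum_distrib_right mult.assoc)
  then show ?thesis
    using sum_aw_isoinv_iso[OF assms] by (simp add: aw_entry_def mult.assoc)
qed

lemma aw_entry_recover:
  assumes "aw_valid A"
  shows "(\<Sum>s<aw_mu A. \<Sum>t<aw_mu A.
      isoinv A (aw_blk A s) (aw_pos A s) * aw_entry A x s t * iso A (aw_blk A t) (aw_pos A t)) = x"
proof -
  let ?iso = "\<lambda>u. iso A (aw_blk A u) (aw_pos A u)"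
    and ?isoinv = "\<lambda>u. isoinv A (aw_blk A u) (aw_pos A u)"
  have "(\<Sum>s<aw_mu A. \<Sum>t<aw_mu A. ?isoinv s * aw_entry A x s t * ?iso t)
      = (\<Sum>s<aw_mu A. ?isoinv s * ?iso s * x * (\<Sum>t<aw_mu A. ?isoinv t * ?iso t))"
    by (simp add: aw_entry_def sum_distrib_left mult.assoc)
  also have "\<dots> = (\<Sum>s<aw_mu A. ?isoinv s * ?iso s * x)"
    using sum_aw_isoinv_iso[OF assms] by simp
  also have "\<dots> = (\<Sum>s<aw_mu A. ?isoinv s * ?iso s) * x"
    by (simp add: sum_distrib_right)
  also have "\<dots> = x"
    using sum_aw_isoinv_iso[OF assms] by simp
  finally show ?thesis .
qed

lemma mult_add_less_mult:
  fixes x s a M :: nat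
  assumes "x < a" "s < M"
  shows "x * M + s < M * a"
proof -
  have "x * M + s < Suc x * M" using assms(2) by simp
  also have "\<dots> \<le> a * M" using assms(1) by (intro mult_le_mono1) simp
  finally show ?thesis by (simp add: mult.commute)
qed

lemma sum_lessThan_mult:
  fixes M a :: nat
  shows "(\<Sum>p<M * a. g p) = (\<Sum>x<a. \<Sum>s<M. g (x * M + s))"
proof -
  have "(\<Sum>p<M * a. g p) = (\<Sum>x<a. sum g {x * M..<x * M + M})"
    using sum.nat_group[of g M a] by (simp add: mult.commute)
  also have "\<dots> = (\<Sum>x<a. \<Sum>s<M. g (x * M + s))"
    by (simp add: sum.atLeastLessThan_shift_0[where m = "_ * M"] lessThan_atLeast0)
  finally show ?thesis .
qed

lemma dim_aw_Phi [simp]: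
  "dim_row (aw_Phi A h) = aw_mu A * dim_row h" "dim_col (aw_Phi A h) = aw_mu A * dim_col h"
  unfolding aw_Phi_def Let_def by simp_all

lemma index_aw_Phi_block:
  assumes "x < dim_row h" "y < dim_col h" "s < aw_mu A" "t < aw_mu A"
  shows "aw_Phi A h $$ (x * aw_mu A + s, y * aw_mu A + t) = aw_entry A (h $$ (x, y)) s t"
  using assms mult_add_less_mult[OF assms(1,3)] mult_add_less_mult[OF assms(2,4)]
  unfolding aw_Phi_def Let_def by simp

lemma aw_Phi_mult:
  assumes "aw_valid A" and h: "h \<in> carrier_mat b a" and F: "F \<in> carrier_mat a c"
  shows "aw_Phi A h * aw_Phi A F = aw_Phi A (h * F)"
proof (rule eq_matI)
  let ?M = "aw_mu A"
  fix r r' assume "r < dim_row (aw_Phi A (h * F))" "r' < dim_col (aw_Phi A (h * F))"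
  then have rr': "r < ?M * b" "r' < ?M * c" using h F by simp_all
  define x s y t where "x = r div ?M" "s = r mod ?M" "y = r' div ?M" "t = r' mod ?M"
  have M: "0 < ?M" using rr' by (cases "?M") simp_all
  have xy: "x < b" "y < c" "s < ?M" "t < ?M"
    using rr' M by (simp_all add: x_s_y_t_def less_mult_imp_div_less mult.commute)
  have r: "r = x * ?M + s" "r' = y * ?M + t" by (simp_all add: x_s_y_t_def)
  have "(aw_Phi A h * aw_Phi A F) $$ (r, r')
      = (\<Sum>p<?M * a. aw_Phi A h $$ (r, p) * aw_Phi A F $$ (p, r'))"
    using rr' h F by (simp add: scalar_prod_def lessThan_atLeast0)
  also have "\<dots> = (\<Sum>l<a. \<Sum>u<?M. aw_Phi A h $$ (r, l * ?M + u) * aw_Phi A F $$ (l * ?M + u, r'))"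
    by (rule sum_lessThan_mult)
  also have "\<dots> = (\<Sum>l<a. \<Sum>u<?M. aw_entry A (h $$ (x, l)) s u * aw_entry A (F $$ (l, y)) u t)"
    using h F xy unfolding r by (intro sum.cong refl) (simp add: index_aw_Phi_block)
  also have "\<dots> = aw_entry A (\<Sum>l<a. h $$ (x, l) * F $$ (l, y)) s t"
    by (simp add: sum_aw_entry_mult[OF assms(1)] aw_entry_sum)
  also have "\<dots> = aw_Phi A (h * F) $$ (r, r')"
    using h F xy unfolding r
    by (simp add: index_aw_Phi_block scalar_prod_def lessThan_atLeast0)
  finally show "(aw_Phi A h * aw_Phi A F) $$ (r, r') = aw_Phi A (h * F) $$ (r, r')" .
qed (use h F in simp_all)

lemma inj_on_aw_Phi:
  assumes "aw_valid A"
  shows "inj_on (aw_Phi A) (carrier_mat m n)"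
proof (rule inj_onI, rule eq_matI)
  fix F G assume F: "F \<in> carrier_mat m n" and G: "G \<in> carrier_mat m n"
    and eq: "aw_Phi A F = aw_Phi A G"
  fix x y assume "x < dim_row G" "y < dim_col G"
  then have "x < dim_row F" "y < dim_col F" "x < dim_row G" "y < dim_col G" using F G by simp_all
  then show "F $$ (x, y) = G $$ (x, y)"
    using eq aw_entry_recover[OF assms, of "F $$ (x, y)"] aw_entry_recover[OF assms, of "G $$ (x, y)"]
    by (metis (no_types, lifting) index_aw_Phi_block lessThan_iff sum.cong)
qed auto

lemma mat_eq_if_mult_eq_unit_columns:
  fixes H D1 D2 :: "'a::ring_1 mat"
  assumes H: "H \<in> carrier_mat nr a" and D: "D1 \<in> carrier_mat a nc" "D2 \<in> carrier_mat a nc"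
    and mult_eq: "H * D1 = H * D2"
    and unit_col: "\<And>x. x \<in> I \<Longrightarrow> rw x < nr \<and> H *\<^sub>v unit_vec a (cl x) = unit_vec nr (rw x)"
    and inj: "inj_on rw I"
    and other_rows: "\<And>p j. p < a \<Longrightarrow> p \<notin> cl ` I \<Longrightarrow> j < nc \<Longrightarrow> D1 $$ (p, j) = D2 $$ (p, j)"
  shows "D1 = D2"
proof (rule eq_matI)
  fix p j assume "p < dim_row D2" "j < dim_col D2"
  then have p: "p < a" and j: "j < nc" using D by simp_all
  show "D1 $$ (p, j) = D2 $$ (p, j)"
  proof (cases "p \<in> cl ` I")
    case False
    then show ?thesis using other_rows p j by blast
  next
    case True
    then obtain x where x: "x \<in> I" "p = cl x" by blast
    \<comment> \<open>row \<open>rw x\<close> of \<open>H * (D1 - D2) = 0\<close> isolates row \<open>cl x\<close> of \<open>D1 - D2\<close>\<close>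
    define \<delta> where "\<delta> q = D1 $$ (q, j) - D2 $$ (q, j)" for q
    have H_entry: "H $$ (rw y, cl z) = (if y = z then 1 else 0)"
      if "y \<in> I" "z \<in> I" "cl z < a" for y z
    proof -
      have "rw y < nr" using unit_col that(1) by blast
      then have "H $$ (rw y, cl z) = (H *\<^sub>v unit_vec a (cl z)) $ rw y"
        using H that(3) by simp
      also have "\<dots> = (if y = z then 1 else 0)"
        using that unit_col inj by (auto simp: inj_on_eq_iff)
      finally show ?thesis .
    qed
    have rw_x: "rw x < nr" using unit_col x(1) by blast
    have "(\<Sum>q<a. H $$ (rw x, q) * \<delta> q) = (H * D1) $$ (rw x, j) - (H * D2) $$ (rw x, j)"
      using H D rw_x j
      by (simp add: \<delta>_def scalar_prod_def lessThan_atLeast0 right_diff_distrib sum_subtractf)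
    also have "\<dots> = 0" using mult_eq by simp
    finally have sum_zero: "(\<Sum>q<a. H $$ (rw x, q) * \<delta> q) = 0" .
    have other_terms: "(\<Sum>q\<in>{..<a} - {p}. H $$ (rw x, q) * \<delta> q) = 0"
    proof (rule sum.neutral, intro ballI)
      fix q assume q: "q \<in> {..<a} - {p}"
      show "H $$ (rw x, q) * \<delta> q = 0"
      proof (cases "q \<in> cl ` I")
        case True
        then obtain z where "z \<in> I" "q = cl z" by blast
        then show ?thesis using H_entry[OF x(1)] q x by auto
      next
        case False
        then show ?thesis using other_rows q j by (simp add: \<delta>_def)
      qed
    qed
    have "(\<Sum>q<a. H $$ (rw x, q) * \<delta> q) = H $$ (rw x, p) * \<delta> p"
      using sum.remove[of "{..<a}" p "\<lambda>q. H $$ (rw x, q) * \<delta> q"] other_terms p by simp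
    also have "\<dots> = \<delta> p" using H_entry[OF x(1) x(1)] p x(2) by simp
    finally show ?thesis using sum_zero by (simp add: \<delta>_def)
  qed
qed (use D in simp_all)

lemma column_adapted_unit_columns:
  assumes "column_adapted A h"
  obtains J where
    "dep_rows A h = (\<lambda>(k, i). aw_vidx A k (J k i)) ` aw_vidx_domain A (dim_row h)"
    "\<And>k i. (k, i) \<in> aw_vidx_domain A (dim_row h) \<Longrightarrow>
       aw_Phi A h *\<^sub>v unit_vec (aw_mu A * dim_col h) (aw_vidx A k (J k i))
         = unit_vec (aw_mu A * dim_row h) (aw_vidx A k i)"
proof -
  have "\<forall>k\<in>{1..nq A}. \<exists>j. j ` {1..mu A k * dim_row h} = frakS A h k \<and>
      (\<forall>i\<in>{1..mu A k * dim_row h}. aw_Phi A h *\<^sub>v aw_vec A (dim_col h) k (j i) = aw_vec A (dim_row h) k i)"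
    using assms unfolding column_adapted_def by metis
  then obtain J where J: "\<And>k. k \<in> {1..nq A} \<Longrightarrow> J k ` {1..mu A k * dim_row h} = frakS A h k \<and>
      (\<forall>i\<in>{1..mu A k * dim_row h}. aw_Phi A h *\<^sub>v aw_vec A (dim_col h) k (J k i) = aw_vec A (dim_row h) k i)"
    by metis
  show ?thesis
  proof
    have "dep_rows A h = (\<Union>k\<in>{1..nq A}. (\<lambda>i. aw_vidx A k (J k i)) ` {1..mu A k * dim_row h})"
      unfolding dep_rows_def by (intro SUP_cong refl) (simp add: J[THEN conjunct1, symmetric] image_image)
    also have "\<dots> = (\<lambda>(k, i). aw_vidx A k (J k i)) ` aw_vidx_domain A (dim_row h)"
      unfolding aw_vidx_domain_def by auto
    finally show "dep_rows A h = (\<lambda>(k, i). aw_vidx A k (J k i)) ` aw_vidx_domain A (dim_row h)" .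
    show "aw_Phi A h *\<^sub>v unit_vec (aw_mu A * dim_col h) (aw_vidx A k (J k i))
         = unit_vec (aw_mu A * dim_row h) (aw_vidx A k i)"
      if "(k, i) \<in> aw_vidx_domain A (dim_row h)" for k i
      using J that unfolding aw_vidx_domain_def aw_vec_def by auto
  qed
qed

lemma aw_Phi_eq_if_free_rows_eq:
  assumes valid: "aw_valid A" and adapted: "column_adapted A h"
    and h: "h \<in> carrier_mat n m" and F: "F1 \<in> carrier_mat m c" "F2 \<in> carrier_mat m c"
    and mult_eq: "h * F1 = h * F2"
    and free_rows: "\<And>p q. p < aw_mu A * m \<Longrightarrow> p \<notin> dep_rows A h \<Longrightarrow> q < aw_mu A * c \<Longrightarrow>
      aw_Phi A F1 $$ (p, q) = aw_Phi A F2 $$ (p, q)"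
  shows "F1 = F2"
proof -
  obtain J where dep: "dep_rows A h = (\<lambda>(k, i). aw_vidx A k (J k i)) ` aw_vidx_domain A n"
    and unit_col: "\<And>k i. (k, i) \<in> aw_vidx_domain A n \<Longrightarrow>
       aw_Phi A h *\<^sub>v unit_vec (aw_mu A * m) (aw_vidx A k (J k i)) = unit_vec (aw_mu A * n) (aw_vidx A k i)"
    using column_adapted_unit_columns[OF adapted] h by auto
  have "aw_Phi A F1 = aw_Phi A F2"
  proof (rule mat_eq_if_mult_eq_unit_columns[where I = "aw_vidx_domain A n"
        and rw = "\<lambda>(k, i). aw_vidx A k i" and cl = "\<lambda>(k, i). aw_vidx A k (J k i)"])
    show "aw_Phi A h \<in> carrier_mat (aw_mu A * n) (aw_mu A * m)"
      and "aw_Phi A F1 \<in> carrier_mat (aw_mu A * m) (aw_mu A * c)"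
      and "aw_Phi A F2 \<in> carrier_mat (aw_mu A * m) (aw_mu A * c)"
      using h F by auto
    show "aw_Phi A h * aw_Phi A F1 = aw_Phi A h * aw_Phi A F2"
      using aw_Phi_mult[OF valid h] F mult_eq by simp
    show "inj_on (\<lambda>(k, i). aw_vidx A k i) (aw_vidx_domain A n)"
      by (rule inj_on_aw_vidx[OF valid])
    show "(case x of (k, i) \<Rightarrow> aw_vidx A k i) < aw_mu A * n \<and>
        aw_Phi A h *\<^sub>v unit_vec (aw_mu A * m) (case x of (k, i) \<Rightarrow> aw_vidx A k (J k i))
          = unit_vec (aw_mu A * n) (case x of (k, i) \<Rightarrow> aw_vidx A k i)"
      if "x \<in> aw_vidx_domain A n" for x
      using that unit_col aw_vidx_div_mod(3)[OF valid] by (cases x) simp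
  qed (use free_rows in \<open>simp add: dep\<close>)
  then show ?thesis
    using inj_on_aw_Phi[OF valid] F by (auto dest: inj_onD)
qed

theorem lemma4p6:
  fixes A :: "'a::ring_1 awdata" and n m :: nat and f1 f2 :: "'a mat \<times> 'a mat"
  assumes "right_artinian TYPE('a)"
    and "aw_valid A"
    and "OVIC_mor A n m f1" and "OVIC_mor A n m f2"
    and "snd f1 = snd f2"
    and "\<forall>p < aw_mu A * m. p \<notin> dep_rows A (snd f1) \<longrightarrow>
           (\<forall>c < aw_mu A * n. aw_Phi A (fst f1) $$ (p, c) = aw_Phi A (fst f2) $$ (p, c))"
  shows "f1 = f2"
proof -
  obtain F1 F2 h where f: "f1 = (F1, h)" "f2 = (F2, h)"
    using assms(5) by (metis prod.collapse)
  have F: "F1 \<in> carrier_mat m n" "F2 \<in> carrier_mat m n" and h: "h \<in> carrier_mat n m"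
    and inverse: "h * F1 = 1\<^sub>m n" "h * F2 = 1\<^sub>m n" and adapted: "column_adapted A h"
    using assms(3,4) unfolding f OVIC_mor_def VIC_mor_def by auto
  have "F1 = F2"
    using aw_Phi_eq_if_free_rows_eq[OF assms(2) adapted h F] inverse assms(6)
    unfolding f by simp
  then show "f1 = f2" unfolding f by simp
qed

end
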